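(* (a) There are absolute constants $c_1,c_2>0$ such that for all integers $m,n\ge 2$, $$c_1(m+n)\le \mathrm{bdim}(P_m\times P_n)\le c_2(m+n).$$ (b) For each integer $d\ge2$ there are constants $c_1(d),c_2(d)>0$ such that for all integers $n_1,\dots,n_d\ge2$, $$c_1(d)\sum_{i=1}^d n_i\le \mathrm{bdim}\Big(\prod_{i=1}^d P_{n_i}\Big)\le c_2(d)\sum_{i=1}^d n_i.$$
   Context: $P_m\times P_n$ denotes the Cartesian product of paths (the grid graph), and $\prod_{i=1}^d P_{n_i}$ the $d$-dimensional grid (iterated Cartesian product). $d(x,y)$ denotes graph distance. For an integer $k\ge1$ let $d_k(x,y)=\min\{d(x,y),k+1\}$. A function $f:V(G)\to\mathbb{Z}_{\ge 0}$ is a resolving broadcast of $G$ if for all distinct $x,y\in V(G)$ there is $z\in V(G)$ with $f(z)=i>0$ and $d_i(x,z)\ne d_i(y,z)$. The broadcast dimension $\mathrm{bdim}(G)$ is the minimum of $\sum_{v\in V(G)}f(v)$ over all resolving broadcasts $f$ of $G$. *)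

theory Defs
  imports Complex_Main
begin

definition walk_of_len :: "'a set \<Rightarrow> ('a \<Rightarrow> 'a \<Rightarrow> bool) \<Rightarrow> 'a \<Rightarrow> 'a \<Rightarrow> nat \<Rightarrow> bool" where
  "walk_of_len V E x y k \<longleftrightarrow> (\<exists>p :: nat \<Rightarrow> 'a. p 0 = x \<and> p k = y \<and>
      (\<forall>i\<le>k. p i \<in> V) \<and> (\<forall>i<k. E (p i) (p (Suc i))))"

text \<open>Graph distance: length of a shortest walk (graphs considered here are connected).\<close>
definition gdist :: "'a set \<Rightarrow> ('a \<Rightarrow> 'a \<Rightarrow> bool) \<Rightarrow> 'a \<Rightarrow> 'a \<Rightarrow> nat" where
  "gdist V E x y = (LEAST k. walk_of_len V E x y k)"

definition tdist :: "'a set \<Rightarrow> ('a \<Rightarrow> 'a \<Rightarrow> bool) \<Rightarrow> nat \<Rightarrow> 'a \<Rightarrow> 'a \<Rightarrow> nat" where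
  "tdist V E k x y = min (gdist V E x y) (k + 1)"

definition resolving_broadcast :: "'a set \<Rightarrow> ('a \<Rightarrow> 'a \<Rightarrow> bool) \<Rightarrow> ('a \<Rightarrow> nat) \<Rightarrow> bool" where
  "resolving_broadcast V E f \<longleftrightarrow> (\<forall>v. v \<notin> V \<longrightarrow> f v = 0) \<and>
     (\<forall>x\<in>V. \<forall>y\<in>V. x \<noteq> y \<longrightarrow>
        (\<exists>z\<in>V. f z > 0 \<and> tdist V E (f z) x z \<noteq> tdist V E (f z) y z))"

definition bdim :: "'a set \<Rightarrow> ('a \<Rightarrow> 'a \<Rightarrow> bool) \<Rightarrow> nat" where
  "bdim V E = (LEAST s. \<exists>f. resolving_broadcast V E f \<and> (\<Sum>v\<in>V. f v) = s)"

definition path_V :: "nat \<Rightarrow> nat set" where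
  "path_V n = {0..<n}"

definition path_E :: "nat \<Rightarrow> nat \<Rightarrow> bool" where
  "path_E a b \<longleftrightarrow> a + 1 = b \<or> b + 1 = a"

definition cart_V :: "'a set \<Rightarrow> 'b set \<Rightarrow> ('a \<times> 'b) set" where
  "cart_V V1 V2 = V1 \<times> V2"

definition cart_E :: "('a \<Rightarrow> 'a \<Rightarrow> bool) \<Rightarrow> ('b \<Rightarrow> 'b \<Rightarrow> bool) \<Rightarrow> ('a \<times> 'b) \<Rightarrow> ('a \<times> 'b) \<Rightarrow> bool" where
  "cart_E E1 E2 u v \<longleftrightarrow> (E1 (fst u) (fst v) \<and> snd u = snd v) \<or> (fst u = fst v \<and> E2 (snd u) (snd v))"

text \<open>d-dimensional grid \<Prod>_{i<d} P_{ns!i} (iterated Cartesian product of paths);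
  vertices are lists of length d = length ns, two vertices adjacent iff they differ in exactly
  one coordinate, where they are adjacent in the corresponding path.\<close>
definition grid_V :: "nat list \<Rightarrow> nat list set" where
  "grid_V ns = {x. length x = length ns \<and> (\<forall>i<length ns. x ! i \<in> path_V (ns ! i))}"

definition grid_E :: "nat list \<Rightarrow> nat list \<Rightarrow> bool" where
  "grid_E x y \<longleftrightarrow> length x = length y \<and>
     (\<exists>i<length x. path_E (x ! i) (y ! i) \<and> (\<forall>j<length x. j \<noteq> i \<longrightarrow> x ! j = y ! j))"

end

theory Submission
  imports Defs
begin

text \<open>Graph distance in a grid is the \<open>\<ell>\<^sub>1\<close>-distance of the coordinate lists.
  Broadcasting with power \<open>N = \<Sum> n\<^sub>i\<close> from the origin and from the far corner of each axis
  sees exact distances; the distance to the origin is \<open>\<Sum> x\<^sub>i\<close> and the distance to the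
  \<open>j\<close>-th corner is that sum plus \<open>n\<^sub>j - 1 - 2 x\<^sub>j\<close>, so every vertex is resolved at
  total cost \<open>(d + 1) N\<close>. Conversely, two neighbours \<open>t, t + 1\<close> on the \<open>j\<close>-th axis are
  resolved only by a vertex \<open>z\<close> whose \<open>j\<close>-th coordinate lies within \<open>f z + 1\<close> of \<open>t\<close>,
  so \<open>z\<close> accounts for at most \<open>5 f z\<close> of the \<open>n\<^sub>j - 1\<close> axis edges, and \<open>n\<^sub>j \<le> 6 \<Sum> f\<close>
  for every \<open>j\<close>. The two-dimensional statement is the case \<open>d = 2\<close>, transported along the
  isomorphism \<open>P\<^sub>m \<times> P\<^sub>n \<cong> \<Prod> P\<^sub>n\<^sub>i\<close>.\<close>

lemma gdist_eqI:
  fixes D :: "'a \<Rightarrow> nat"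
  assumes xV: "x \<in> V" and yV: "y \<in> V"
    and zero: "\<And>u. u \<in> V \<Longrightarrow> D u = 0 \<Longrightarrow> u = y"
    and Dy: "D y = 0"
    and step: "\<And>u. u \<in> V \<Longrightarrow> D u > 0 \<Longrightarrow> \<exists>v\<in>V. E u v \<and> D v + 1 = D u"
    and lip: "\<And>u v. u \<in> V \<Longrightarrow> v \<in> V \<Longrightarrow> E u v \<Longrightarrow> D u \<le> D v + 1"
  shows "gdist V E x y = D x"
proof -
  have walk: "walk_of_len V E u y n" if "u \<in> V" "D u = n" for u n
    using that
  proof (induction n arbitrary: u)
    case 0
    then have "u = y" using zero by auto
    then show ?case unfolding walk_of_len_def using yV by (intro exI[of _ "\<lambda>_. y"]) auto
  next
    case (Suc n)
    then obtain v where v: "v \<in> V" "E u v" "D v + 1 = D u" using step by fastforce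
    then have "walk_of_len V E v y n" using Suc by auto
    then obtain p where p: "p 0 = v" "p n = y" "\<forall>i\<le>n. p i \<in> V" "\<forall>i<n. E (p i) (p (Suc i))"
      unfolding walk_of_len_def by blast
    show ?case unfolding walk_of_len_def
    proof (intro exI[of _ "case_nat u p"] conjI allI impI)
      show "case_nat u p i \<in> V" if "i \<le> Suc n" for i
        using that p Suc.prems by (cases i) auto
      show "E (case_nat u p i) (case_nat u p (Suc i))" if "i < Suc n" for i
        using that p v by (cases i) auto
    qed (use p in auto)
  qed
  have shortest: "D u \<le> k" if "walk_of_len V E u y k" for u k
    using that
  proof (induction k arbitrary: u)
    case 0
    then show ?case using Dy unfolding walk_of_len_def by auto
  next
    case (Suc k)
    then obtain p where p: "p 0 = u" "p (Suc k) = y" "\<forall>i\<le>Suc k. p i \<in> V" "\<forall>i<Suc k. E (p i) (p (Suc i))"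
      unfolding walk_of_len_def by blast
    have "walk_of_len V E (p 1) y k" unfolding walk_of_len_def
      by (intro exI[of _ "\<lambda>i. p (Suc i)"]) (use p in auto)
    then have "D (p 1) \<le> k" using Suc.IH by auto
    moreover have "D u \<le> D (p 1) + 1" using lip[of u "p 1"] p by auto
    ultimately show ?case by simp
  qed
  show ?thesis unfolding gdist_def
    by (rule Least_equality) (use walk xV shortest in auto)
qed

lemma tdist_neq_imp_gdist_le:
  assumes "tdist V E k x z \<noteq> tdist V E k y z"
  shows "gdist V E x z \<le> k \<or> gdist V E y z \<le> k"
  using assms unfolding tdist_def by auto

lemma bdim_le: "resolving_broadcast V E f \<Longrightarrow> bdim V E \<le> (\<Sum>v\<in>V. f v)"
  unfolding bdim_def by (rule Least_le) blast

lemma bdim_attained: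
  assumes "resolving_broadcast V E f"
  obtains g where "resolving_broadcast V E g" "(\<Sum>v\<in>V. g v) = bdim V E"
  using LeastI_ex[of "\<lambda>s. \<exists>f. resolving_broadcast V E f \<and> (\<Sum>v\<in>V. f v) = s"] assms
  unfolding bdim_def by blast

lemma walk_of_len_iso:
  assumes bij: "bij_betw \<phi> V1 V2" and e: "\<forall>u\<in>V1. \<forall>v\<in>V1. E1 u v \<longleftrightarrow> E2 (\<phi> u) (\<phi> v)"
    and x: "x \<in> V1" and y: "y \<in> V1"
  shows "walk_of_len V2 E2 (\<phi> x) (\<phi> y) k \<longleftrightarrow> walk_of_len V1 E1 x y k"
proof
  assume "walk_of_len V1 E1 x y k"
  then obtain p where p: "p 0 = x" "p k = y" "\<forall>i\<le>k. p i \<in> V1" "\<forall>i<k. E1 (p i) (p (Suc i))"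
    unfolding walk_of_len_def by blast
  show "walk_of_len V2 E2 (\<phi> x) (\<phi> y) k" unfolding walk_of_len_def
    by (intro exI[of _ "\<phi> \<circ> p"]) (use p e bij bij_betwE in fastforce)
next
  let ?\<psi> = "inv_into V1 \<phi>"
  assume "walk_of_len V2 E2 (\<phi> x) (\<phi> y) k"
  then obtain q where q: "q 0 = \<phi> x" "q k = \<phi> y" "\<forall>i\<le>k. q i \<in> V2" "\<forall>i<k. E2 (q i) (q (Suc i))"
    unfolding walk_of_len_def by blast
  have \<psi>\<phi>: "?\<psi> (\<phi> a) = a" if "a \<in> V1" for a
    using bij that bij_betw_inv_into_left by metis
  have \<phi>\<psi>: "\<phi> (?\<psi> b) = b" "?\<psi> b \<in> V1" if "b \<in> V2" for b
    using bij that bij_betw_inv_into_right bij_betw_inv_into bij_betwE by metis+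
  show "walk_of_len V1 E1 x y k" unfolding walk_of_len_def
  proof (intro exI[of _ "?\<psi> \<circ> q"] conjI allI impI)
    show "(?\<psi> \<circ> q) 0 = x" "(?\<psi> \<circ> q) k = y" using q \<psi>\<phi> x y by simp_all
    show "(?\<psi> \<circ> q) i \<in> V1" if "i \<le> k" for i using that q \<phi>\<psi> by simp
    show "E1 ((?\<psi> \<circ> q) i) ((?\<psi> \<circ> q) (Suc i))" if "i < k" for i
      using that e \<phi>\<psi> q by simp
  qed
qed

lemma resolving_broadcast_iso:
  assumes bij: "bij_betw \<phi> V1 V2" and e: "\<forall>u\<in>V1. \<forall>v\<in>V1. E1 u v \<longleftrightarrow> E2 (\<phi> u) (\<phi> v)"
    and f: "resolving_broadcast V1 E1 f"
  shows "\<exists>g. resolving_broadcast V2 E2 g \<and> (\<Sum>v\<in>V2. g v) = (\<Sum>v\<in>V1. f v)"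
proof -
  let ?\<psi> = "inv_into V1 \<phi>"
  define g where "g v = (if v \<in> V2 then f (?\<psi> v) else 0)" for v
  have \<psi>\<phi>: "?\<psi> (\<phi> a) = a" "\<phi> a \<in> V2" if "a \<in> V1" for a
    using bij that bij_betw_inv_into_left bij_betwE by metis+
  have \<phi>\<psi>: "\<phi> (?\<psi> b) = b" "?\<psi> b \<in> V1" if "b \<in> V2" for b
    using bij that bij_betw_inv_into_right bij_betw_inv_into bij_betwE by metis+
  have tdist_\<phi>: "tdist V2 E2 k (\<phi> a) (\<phi> b) = tdist V1 E1 k a b" if "a \<in> V1" "b \<in> V1" for a b k
  proof -
    have "walk_of_len V2 E2 (\<phi> a) (\<phi> b) = walk_of_len V1 E1 a b"
      by (intro ext) (rule walk_of_len_iso[OF bij e that])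
    then show ?thesis unfolding tdist_def gdist_def by simp
  qed
  have "resolving_broadcast V2 E2 g" unfolding resolving_broadcast_def
  proof (intro conjI allI impI ballI)
    show "g v = 0" if "v \<notin> V2" for v using that unfolding g_def by simp
  next
    fix x y assume xV: "x \<in> V2" and yV: "y \<in> V2" and "x \<noteq> y"
    then have "?\<psi> x \<noteq> ?\<psi> y" using \<phi>\<psi> by metis
    then obtain z where z: "z \<in> V1" "f z > 0" "tdist V1 E1 (f z) (?\<psi> x) z \<noteq> tdist V1 E1 (f z) (?\<psi> y) z"
      using f \<phi>\<psi> xV yV unfolding resolving_broadcast_def by blast
    moreover have "g (\<phi> z) = f z" using z(1) \<psi>\<phi> unfolding g_def by simp
    ultimately show "\<exists>z\<in>V2. g z > 0 \<and> tdist V2 E2 (g z) x z \<noteq> tdist V2 E2 (g z) y z"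
      using tdist_\<phi>[of "?\<psi> x" z] tdist_\<phi>[of "?\<psi> y" z] \<phi>\<psi> xV yV \<psi>\<phi>(2)
      by (intro bexI[of _ "\<phi> z"]) auto
  qed
  moreover have "(\<Sum>v\<in>V2. g v) = (\<Sum>v\<in>V1. f v)"
    unfolding g_def using sum.reindex_bij_betw[OF bij_betw_inv_into[OF bij], of f] by simp
  ultimately show ?thesis by blast
qed

lemma bdim_iso:
  assumes bij: "bij_betw \<phi> V1 V2" and e: "\<forall>u\<in>V1. \<forall>v\<in>V1. E1 u v \<longleftrightarrow> E2 (\<phi> u) (\<phi> v)"
  shows "bdim V2 E2 = bdim V1 E1"
proof -
  let ?\<psi> = "inv_into V1 \<phi>"
  have bij': "bij_betw ?\<psi> V2 V1" by (rule bij_betw_inv_into[OF bij])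
  have e': "\<forall>u\<in>V2. \<forall>v\<in>V2. E2 u v \<longleftrightarrow> E1 (?\<psi> u) (?\<psi> v)"
  proof (intro ballI)
    fix u v assume "u \<in> V2" "v \<in> V2"
    then have "?\<psi> u \<in> V1" "?\<psi> v \<in> V1" "\<phi> (?\<psi> u) = u" "\<phi> (?\<psi> v) = v"
      using bij_betwE[OF bij'] bij_betw_inv_into_right[OF bij] by auto
    then show "E2 u v \<longleftrightarrow> E1 (?\<psi> u) (?\<psi> v)" using e by metis
  qed
  have "(\<exists>g. resolving_broadcast V2 E2 g \<and> (\<Sum>v\<in>V2. g v) = s)
      \<longleftrightarrow> (\<exists>f. resolving_broadcast V1 E1 f \<and> (\<Sum>v\<in>V1. f v) = s)" for s
    using resolving_broadcast_iso[OF bij e] resolving_broadcast_iso[OF bij' e'] by metis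
  then show ?thesis unfolding bdim_def by simp
qed

definition absdiff :: "nat \<Rightarrow> nat \<Rightarrow> nat" where
  "absdiff a b = (a - b) + (b - a)"

definition l1_dist :: "nat \<Rightarrow> nat list \<Rightarrow> nat list \<Rightarrow> nat" where
  "l1_dist d x y = (\<Sum>i<d. absdiff (x!i) (y!i))"

lemma grid_V_length: "x \<in> grid_V ns \<Longrightarrow> length x = length ns"
  unfolding grid_V_def by simp

lemma grid_V_nth_less: "x \<in> grid_V ns \<Longrightarrow> i < length ns \<Longrightarrow> x!i < ns!i"
  unfolding grid_V_def path_V_def by simp

lemma finite_grid_V: "finite (grid_V ns)"
proof (rule finite_subset)
  let ?N = "\<Sum>i<length ns. ns!i"
  show "grid_V ns \<subseteq> {xs. set xs \<subseteq> {..<?N} \<and> length xs = length ns}"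
  proof
    fix x assume x: "x \<in> grid_V ns"
    have "a < ?N" if a: "a \<in> set x" for a
    proof -
      obtain i where "i < length ns" "x!i = a"
        using a x by (auto simp: in_set_conv_nth grid_V_length)
      then show ?thesis
        using grid_V_nth_less[OF x] member_le_sum[of i "{..<length ns}" "(!) ns"] by fastforce
    qed
    then show "x \<in> {xs. set xs \<subseteq> {..<?N} \<and> length xs = length ns}"
      using x grid_V_length by auto
  qed
qed (rule finite_lists_length_eq, simp)

lemma absdiff_nth_le_l1_dist: "i < d \<Longrightarrow> absdiff (x!i) (y!i) \<le> l1_dist d x y"
  unfolding l1_dist_def using member_le_sum[of i "{..<d}" "\<lambda>i. absdiff (x!i) (y!i)"] by simp

lemma l1_dist_eq_0:
  "length x = d \<Longrightarrow> length y = d \<Longrightarrow> l1_dist d x y = 0 \<Longrightarrow> x = y"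
  unfolding l1_dist_def absdiff_def by (auto intro!: nth_equalityI le_antisym)

lemma l1_dist_le_sum:
  assumes "x \<in> grid_V ns" "y \<in> grid_V ns"
  shows "l1_dist (length ns) x y \<le> (\<Sum>i<length ns. ns!i)"
  unfolding l1_dist_def absdiff_def
  by (rule sum_mono) (use grid_V_nth_less[OF assms(1)] grid_V_nth_less[OF assms(2)] in fastforce)

lemma l1_dist_grid_E:
  assumes "u \<in> grid_V ns" "v \<in> grid_V ns" "grid_E u v"
  shows "l1_dist (length ns) u y \<le> l1_dist (length ns) v y + 1"
proof -
  let ?d = "length ns"
  obtain i where i: "i < ?d" "path_E (u!i) (v!i)" "\<forall>j<?d. j \<noteq> i \<longrightarrow> u!j = v!j"
    using assms grid_V_length unfolding grid_E_def by metis
  have "l1_dist ?d u y \<le> (\<Sum>j<?d. absdiff (v!j) (y!j) + (if j = i then 1 else 0))"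
    unfolding l1_dist_def
    by (rule sum_mono) (use i in \<open>auto simp: absdiff_def path_E_def\<close>)
  also have "\<dots> = l1_dist ?d v y + 1" unfolding l1_dist_def sum.distrib using i by simp
  finally show ?thesis .
qed

lemma l1_dist_grid_step:
  assumes "u \<in> grid_V ns" "y \<in> grid_V ns" "l1_dist (length ns) u y > 0"
  shows "\<exists>v\<in>grid_V ns. grid_E u v \<and> l1_dist (length ns) v y + 1 = l1_dist (length ns) u y"
proof -
  let ?d = "length ns"
  obtain i where i: "i < ?d" "absdiff (u!i) (y!i) > 0"
    using assms(3) unfolding l1_dist_def by (metis (no_types, lifting) lessThan_iff not_gr0 sum.neutral)
  define v where "v = u[i := (if u!i < y!i then Suc (u!i) else u!i - 1)]"
  have lu: "length u = ?d" "length v = ?d" using assms(1) grid_V_length unfolding v_def by auto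
  have nth_v: "v!j = (if j = i then (if u!i < y!i then Suc (u!i) else u!i - 1) else u!j)" for j
    using i lu unfolding v_def by simp
  have "v \<in> grid_V ns"
    using i lu grid_V_nth_less[OF assms(1)] grid_V_nth_less[OF assms(2) i(1)]
    unfolding grid_V_def path_V_def by (auto simp: nth_v absdiff_def less_imp_diff_less)
  moreover have "grid_E u v"
    unfolding grid_E_def using lu i nth_v by (auto simp: path_E_def absdiff_def intro!: exI[of _ i])
  moreover have "l1_dist ?d v y + 1 = (\<Sum>j<?d. absdiff (v!j) (y!j) + (if j = i then 1 else 0))"
    unfolding l1_dist_def sum.distrib using i by simp
  moreover have "\<dots> = l1_dist ?d u y"
    unfolding l1_dist_def by (rule sum.cong) (use i in \<open>auto simp: nth_v absdiff_def\<close>)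
  ultimately show ?thesis by metis
qed

lemma gdist_grid:
  assumes "x \<in> grid_V ns" "y \<in> grid_V ns"
  shows "gdist (grid_V ns) grid_E x y = l1_dist (length ns) x y"
proof (rule gdist_eqI[OF assms])
  show "u = y" if "u \<in> grid_V ns" "l1_dist (length ns) u y = 0" for u
    using that assms l1_dist_eq_0 grid_V_length by metis
qed (use assms l1_dist_grid_step l1_dist_grid_E in \<open>auto simp: l1_dist_def absdiff_def\<close>)

lemma tdist_grid:
  assumes "x \<in> grid_V ns" "y \<in> grid_V ns" "(\<Sum>i<length ns. ns!i) \<le> k"
  shows "tdist (grid_V ns) grid_E k x y = l1_dist (length ns) x y"
  using gdist_grid[OF assms(1,2)] l1_dist_le_sum[OF assms(1,2)] assms(3)
  unfolding tdist_def by simp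

definition axis_point :: "nat \<Rightarrow> nat \<Rightarrow> nat \<Rightarrow> nat list" where
  "axis_point d j t = (replicate d 0)[j := t]"

lemma length_axis_point [simp]: "length (axis_point d j t) = d"
  unfolding axis_point_def by simp

lemma nth_axis_point: "i < d \<Longrightarrow> axis_point d j t ! i = (if i = j then t else 0)"
  unfolding axis_point_def by (simp add: nth_list_update)

lemma axis_point_in_grid_V:
  assumes "\<forall>i<length ns. 0 < ns!i" "j < length ns" "t < ns!j"
  shows "axis_point (length ns) j t \<in> grid_V ns"
  using assms unfolding grid_V_def path_V_def by (auto simp: nth_axis_point)

lemma l1_dist_axis_point:
  assumes "j < d"
  shows "l1_dist d x (axis_point d j t) + x!j = l1_dist d x (replicate d 0) + absdiff (x!j) t"
proof -
  have "l1_dist d x (axis_point d j t) + x!j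
      = (\<Sum>i<d. absdiff (x!i) (axis_point d j t ! i) + (if i = j then x!j else 0))"
    unfolding l1_dist_def sum.distrib using assms by simp
  also have "\<dots> = (\<Sum>i<d. absdiff (x!i) 0 + (if i = j then absdiff (x!j) t else 0))"
    by (rule sum.cong) (use assms in \<open>auto simp: nth_axis_point absdiff_def\<close>)
  also have "\<dots> = l1_dist d x (replicate d 0) + absdiff (x!j) t"
    unfolding l1_dist_def sum.distrib using assms by simp
  finally show ?thesis .
qed

lemma grid_V_eqI_corner_dist:
  assumes x: "x \<in> grid_V ns" and y: "y \<in> grid_V ns"
    and origin: "l1_dist (length ns) x (replicate (length ns) 0) = l1_dist (length ns) y (replicate (length ns) 0)"
    and corners: "\<And>j. j < length ns \<Longrightarrow>
      l1_dist (length ns) x (axis_point (length ns) j (ns!j - 1)) =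
      l1_dist (length ns) y (axis_point (length ns) j (ns!j - 1))"
  shows "x = y"
proof (rule nth_equalityI)
  show "length x = length y" using x y grid_V_length by metis
  fix j assume "j < length x"
  then have j: "j < length ns" using x grid_V_length by metis
  show "x!j = y!j"
    using l1_dist_axis_point[OF j, of x "ns!j - 1"] l1_dist_axis_point[OF j, of y "ns!j - 1"]
      origin corners[OF j] grid_V_nth_less[OF x j] grid_V_nth_less[OF y j]
    by (simp add: absdiff_def)
qed

lemma ex_resolving_broadcast_grid:
  assumes ne: "ns \<noteq> []" and pos: "\<forall>i<length ns. 0 < ns!i"
  shows "\<exists>f. resolving_broadcast (grid_V ns) grid_E f \<and>
           (\<Sum>v\<in>grid_V ns. f v) \<le> (length ns + 1) * (\<Sum>i<length ns. ns!i)"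
proof -
  let ?d = "length ns" and ?V = "grid_V ns"
  define N where "N = (\<Sum>i<?d. ns!i)"
  define C where "C = insert (replicate ?d 0) ((\<lambda>j. axis_point ?d j (ns!j - 1)) ` {..<?d})"
  define f where "f v = (if v \<in> C then N else 0)" for v
  have "0 < N" using ne pos member_le_sum[of 0 "{..<?d}" "(!) ns"] unfolding N_def by fastforce
  have "replicate ?d 0 \<in> ?V" using pos unfolding grid_V_def path_V_def by simp
  then have CV: "C \<subseteq> ?V"
    using axis_point_in_grid_V[OF pos] pos unfolding C_def by auto
  have rb: "resolving_broadcast ?V grid_E f"
    unfolding resolving_broadcast_def
  proof (intro conjI allI impI ballI)
    show "f v = 0" if "v \<notin> ?V" for v using that CV unfolding f_def by auto
  next
    fix x y assume x: "x \<in> ?V" and y: "y \<in> ?V" and "x \<noteq> y"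
    then obtain z where "z \<in> C" "l1_dist ?d x z \<noteq> l1_dist ?d y z"
      using grid_V_eqI_corner_dist unfolding C_def by blast
    then show "\<exists>z\<in>?V. f z > 0 \<and> tdist ?V grid_E (f z) x z \<noteq> tdist ?V grid_E (f z) y z"
      using CV tdist_grid[OF x] tdist_grid[OF y] \<open>0 < N\<close> unfolding f_def N_def
      by (intro bexI[of _ z]) auto
  qed
  have "card C \<le> ?d + 1"
    unfolding C_def using card_image_le[of "{..<?d}" "\<lambda>j. axis_point ?d j (ns!j - 1)"]
    by (simp add: card_insert_if)
  have "(\<Sum>v\<in>?V. f v) = card C * N"
    using CV finite_grid_V unfolding f_def by (simp add: sum.If_cases Int_absorb1)
  also have "\<dots> \<le> (?d + 1) * N" using \<open>card C \<le> ?d + 1\<close> by (rule mult_le_mono1)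
  finally show ?thesis using rb unfolding N_def by blast
qed

lemma bdim_grid_le:
  assumes "ns \<noteq> []" "\<forall>i<length ns. 0 < ns!i"
  shows "bdim (grid_V ns) grid_E \<le> (length ns + 1) * (\<Sum>i<length ns. ns!i)"
  using ex_resolving_broadcast_grid[OF assms] bdim_le order_trans by metis

lemma card_absdiff_le: "card {t. absdiff t c \<le> r} \<le> 2 * r + 1"
proof -
  have "{t. absdiff t c \<le> r} \<subseteq> {c - r .. c + r}" unfolding absdiff_def by auto
  then have "card {t. absdiff t c \<le> r} \<le> card {c - r .. c + r}" by (rule card_mono[rotated]) simp
  then show ?thesis by simp
qed

lemma grid_axis_edge_resolved:
  assumes f: "resolving_broadcast (grid_V ns) grid_E f"
    and pos: "\<forall>i<length ns. 0 < ns!i" and j: "j < length ns" and t: "Suc t < ns!j"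
  shows "\<exists>z\<in>grid_V ns. 0 < f z \<and> absdiff t (z!j) \<le> f z + 1"
proof -
  let ?a = "axis_point (length ns) j"
  have aV: "?a t \<in> grid_V ns" "?a (Suc t) \<in> grid_V ns"
    using axis_point_in_grid_V[OF pos j] t by auto
  moreover have "?a t \<noteq> ?a (Suc t)" using nth_axis_point[OF j] by (metis n_not_Suc_n)
  ultimately obtain z where z: "z \<in> grid_V ns" "0 < f z"
    "tdist (grid_V ns) grid_E (f z) (?a t) z \<noteq> tdist (grid_V ns) grid_E (f z) (?a (Suc t)) z"
    using f unfolding resolving_broadcast_def by blast
  then have "l1_dist (length ns) (?a t) z \<le> f z \<or> l1_dist (length ns) (?a (Suc t)) z \<le> f z"
    using tdist_neq_imp_gdist_le gdist_grid[OF aV(1) z(1)] gdist_grid[OF aV(2) z(1)] by metis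
  then have "absdiff t (z!j) \<le> f z \<or> absdiff (Suc t) (z!j) \<le> f z"
    using absdiff_nth_le_l1_dist[OF j] nth_axis_point[OF j] by (metis le_trans)
  then show ?thesis using z unfolding absdiff_def by auto
qed

lemma grid_axis_le_broadcast_cost:
  assumes f: "resolving_broadcast (grid_V ns) grid_E f"
    and pos: "\<forall>i<length ns. 0 < ns!i" and j: "j < length ns"
  shows "ns!j - 1 \<le> 5 * (\<Sum>v\<in>grid_V ns. f v)"
proof -
  let ?V = "grid_V ns"
  define W where "W z = {t. 0 < f z \<and> absdiff t (z!j) \<le> f z + 1}" for z
  have card_W: "card (W z) \<le> 5 * f z" for z
  proof (cases "f z = 0")
    case False
    then have "card (W z) \<le> 2 * (f z + 1) + 1"
      using card_absdiff_le[of "z!j" "f z + 1"] unfolding W_def by simp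
    with False show ?thesis by simp
  qed (simp add: W_def)
  have "{..<ns!j - 1} \<subseteq> (\<Union>z\<in>?V. W z)"
    using grid_axis_edge_resolved[OF f pos j] unfolding W_def by fastforce
  moreover have "finite (W z)" for z
    by (rule finite_subset[of _ "{..z!j + f z + 1}"]) (auto simp: W_def absdiff_def)
  ultimately have "ns!j - 1 \<le> card (\<Union>z\<in>?V. W z)"
    using card_mono[of "\<Union>z\<in>?V. W z" "{..<ns!j - 1}"] finite_grid_V by simp
  also have "\<dots> \<le> (\<Sum>z\<in>?V. card (W z))" by (rule card_UN_le[OF finite_grid_V])
  also have "\<dots> \<le> (\<Sum>z\<in>?V. 5 * f z)" by (rule sum_mono) (rule card_W)
  finally show ?thesis by (simp add: sum_distrib_left)
qed

lemma bdim_grid_ge: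
  assumes ne: "ns \<noteq> []" and two: "\<forall>i<length ns. 2 \<le> ns!i"
  shows "(\<Sum>i<length ns. ns!i) \<le> 6 * length ns * bdim (grid_V ns) grid_E"
proof -
  have pos: "\<forall>i<length ns. 0 < ns!i" using two by fastforce
  obtain f where f: "resolving_broadcast (grid_V ns) grid_E f"
    "(\<Sum>v\<in>grid_V ns. f v) = bdim (grid_V ns) grid_E"
    using ex_resolving_broadcast_grid[OF ne pos] bdim_attained by metis
  have "(\<Sum>i<length ns. ns!i) \<le> (\<Sum>i<length ns. 6 * bdim (grid_V ns) grid_E)"
    by (rule sum_mono) (use grid_axis_le_broadcast_cost[OF f(1) pos] f(2) two in fastforce)
  then show ?thesis by simp
qed

lemma bdim_cart_path_eq_grid:
  "bdim (cart_V (path_V m) (path_V n)) (cart_E path_E path_E) = bdim (grid_V [m, n]) grid_E"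
proof (rule bdim_iso[symmetric])
  have "grid_V [m, n] = (\<lambda>(a, b). [a, b]) ` (path_V m \<times> path_V n)"
    unfolding grid_V_def by (auto simp: length_Suc_conv All_less_Suc2)
  then show "bij_betw (\<lambda>(a, b). [a, b]) (cart_V (path_V m) (path_V n)) (grid_V [m, n])"
    unfolding cart_V_def by (auto simp: bij_betw_def inj_on_def)
  show "\<forall>u\<in>cart_V (path_V m) (path_V n). \<forall>v\<in>cart_V (path_V m) (path_V n).
          cart_E path_E path_E u v \<longleftrightarrow> grid_E (case u of (a, b) \<Rightarrow> [a, b]) (case v of (a, b) \<Rightarrow> [a, b])"
    unfolding grid_E_def cart_E_def by (auto simp: Ex_less_Suc2 All_less_Suc2 path_E_def)
qed

lemma bdim_grid_bounds:
  assumes "length ns = d" "d \<ge> 1" "\<forall>i<d. 2 \<le> ns!i"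
  shows "1 / (6 * real d) * real (\<Sum>i<d. ns!i) \<le> real (bdim (grid_V ns) grid_E)"
    and "real (bdim (grid_V ns) grid_E) \<le> (real d + 1) * real (\<Sum>i<d. ns!i)"
proof -
  have "ns \<noteq> []" "\<forall>i<length ns. 0 < ns!i" using assms by auto
  then have "bdim (grid_V ns) grid_E \<le> (d + 1) * (\<Sum>i<d. ns!i)"
    using bdim_grid_le assms(1) by metis
  then show "real (bdim (grid_V ns) grid_E) \<le> (real d + 1) * real (\<Sum>i<d. ns!i)"
    by (metis of_nat_1 of_nat_add of_nat_le_iff of_nat_mult)
  have "real (\<Sum>i<d. ns!i) \<le> 6 * real d * real (bdim (grid_V ns) grid_E)"
    using bdim_grid_ge[OF \<open>ns \<noteq> []\<close>] assms by (metis of_nat_le_iff of_nat_mult of_nat_numeral)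
  then show "1 / (6 * real d) * real (\<Sum>i<d. ns!i) \<le> real (bdim (grid_V ns) grid_E)"
    using assms(2) by (simp add: field_simps)
qed

theorem corollary5p3:
  shows "(\<exists>c1 c2 :: real. c1 > 0 \<and> c2 > 0 \<and>
           (\<forall>m n :: nat. m \<ge> 2 \<longrightarrow> n \<ge> 2 \<longrightarrow>
              c1 * real (m + n) \<le> real (bdim (cart_V (path_V m) (path_V n)) (cart_E path_E path_E)) \<and>
              real (bdim (cart_V (path_V m) (path_V n)) (cart_E path_E path_E)) \<le> c2 * real (m + n)))
       \<and> (\<forall>d :: nat. d \<ge> 2 \<longrightarrow>
           (\<exists>c1 c2 :: real. c1 > 0 \<and> c2 > 0 \<and>
              (\<forall>ns :: nat list. length ns = d \<longrightarrow> (\<forall>i<d. ns ! i \<ge> 2) \<longrightarrow>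
                 c1 * real (\<Sum>i<d. ns ! i) \<le> real (bdim (grid_V ns) grid_E) \<and>
                 real (bdim (grid_V ns) grid_E) \<le> c2 * real (\<Sum>i<d. ns ! i))))"
proof (intro conjI allI impI)
  have "(\<Sum>i<2. [m, n] ! i) = m + n" for m n :: nat by (simp add: numeral_2_eq_2)
  moreover have "\<forall>i<2. 2 \<le> [m, n] ! i" if "2 \<le> m" "2 \<le> n" for m n :: nat
    using that by (simp add: All_less_Suc2 numeral_2_eq_2)
  ultimately show "\<exists>c1 c2 :: real. c1 > 0 \<and> c2 > 0 \<and> (\<forall>m n :: nat. m \<ge> 2 \<longrightarrow> n \<ge> 2 \<longrightarrow>
      c1 * real (m + n) \<le> real (bdim (cart_V (path_V m) (path_V n)) (cart_E path_E path_E)) \<and>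
      real (bdim (cart_V (path_V m) (path_V n)) (cart_E path_E path_E)) \<le> c2 * real (m + n))"
    using bdim_grid_bounds[of "[_, _]" 2] unfolding bdim_cart_path_eq_grid
    by (intro exI[of _ "1 / 12"] exI[of _ 3]) auto
next
  fix d :: nat assume "2 \<le> d"
  then show "\<exists>c1 c2 :: real. c1 > 0 \<and> c2 > 0 \<and> (\<forall>ns. length ns = d \<longrightarrow> (\<forall>i<d. 2 \<le> ns ! i) \<longrightarrow>
      c1 * real (\<Sum>i<d. ns ! i) \<le> real (bdim (grid_V ns) grid_E) \<and>
      real (bdim (grid_V ns) grid_E) \<le> c2 * real (\<Sum>i<d. ns ! i))"
    using bdim_grid_bounds[where d = d]
    by (intro exI[of _ "1 / (6 * real d)"] exI[of _ "real d + 1"]) auto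
qed

end
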